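(* Let $m\ge1$, $N=2^m$, let $\mathcal{A}\subseteq[0,N-1]$ be nonempty and $\mathbf{P}\in\mathbb{F}_2^{N\times N}$ upper triangular with unit diagonal. Then $\mathcal{C}_{\mathbf{P}\boldsymbol{G}_N}(\mathcal{A})\subset\mathcal{C}_{\boldsymbol{G}_N}([\min(\mathcal{A}),N-1])$.
   Context: $[\ell,u]=\{\ell,\dots,u\}$. $\boldsymbol{G}_N=\begin{pmatrix}1&0\\1&1\end{pmatrix}^{\otimes m}$ over $\mathbb{F}_2$, rows/columns indexed by $0,\dots,N-1$; $\mathcal{C}_{\mathbf{B}}(\mathcal{S})$ is the code spanned by the rows of $\mathbf{B}$ indexed by $\mathcal{S}$. *)

theory Defs
  imports Main "HOL-Library.Z2"
begin

text \<open>Matrices over F_2 are functions nat => nat => bit (only indices < N matter);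
  vectors of length N are functions nat => bit, set to 0 outside [0, N-1].\<close>

definition kernel2 :: "nat \<Rightarrow> nat \<Rightarrow> bit" where
  "kernel2 a b = (if a = 0 \<and> b = 1 then 0 else 1)"

text \<open>m-fold Kronecker power of the kernel: G_{2^(m+1)} = kernel2 (x) G_{2^m}.\<close>
fun polarG :: "nat \<Rightarrow> nat \<Rightarrow> nat \<Rightarrow> bit" where
  "polarG 0 i j = 1"
| "polarG (Suc m) i j =
     kernel2 (i div 2 ^ m) (j div 2 ^ m) * polarG m (i mod 2 ^ m) (j mod 2 ^ m)"

definition mat_mult :: "nat \<Rightarrow> (nat \<Rightarrow> nat \<Rightarrow> bit) \<Rightarrow> (nat \<Rightarrow> nat \<Rightarrow> bit) \<Rightarrow> nat \<Rightarrow> nat \<Rightarrow> bit" where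
  "mat_mult N A B i j = (\<Sum>k<N. A i k * B k j)"

definition row_code :: "nat \<Rightarrow> (nat \<Rightarrow> nat \<Rightarrow> bit) \<Rightarrow> nat set \<Rightarrow> (nat \<Rightarrow> bit) set" where
  "row_code N B S = {v. \<exists>c :: nat \<Rightarrow> bit.
      v = (\<lambda>j. if j < N then (\<Sum>i\<in>S. c i * B i j) else 0)}"

end

theory Submission
  imports Defs
begin

text \<open>Row i of P G is the combination of the rows k of G weighted by P i k, so a combination
  of rows of P G indexed by A only involves rows of G in the row supports of P on A.
  For upper triangular P these supports lie in [min A, N-1].\<close>

lemma lincomb_mat_mult:
  "(\<Sum>i\<in>S. c i * mat_mult N P B i j) = (\<Sum>k<N. (\<Sum>i\<in>S. c i * P i k) * B k j)"
proof -
  have "(\<Sum>i\<in>S. c i * mat_mult N P B i j) = (\<Sum>i\<in>S. \<Sum>k<N. c i * P i k * B k j)"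
    unfolding mat_mult_def by (simp only: sum_distrib_left mult.assoc)
  also have "\<dots> = (\<Sum>k<N. \<Sum>i\<in>S. c i * P i k * B k j)"
    by (rule sum.swap)
  finally show ?thesis
    by (simp only: sum_distrib_right)
qed

lemma row_code_mat_mult_subset:
  assumes "T \<subseteq> {..<N}"
    and "\<And>i k. i \<in> S \<Longrightarrow> k < N \<Longrightarrow> k \<notin> T \<Longrightarrow> P i k = 0"
  shows "row_code N (mat_mult N P B) S \<subseteq> row_code N B T"
proof
  fix v assume "v \<in> row_code N (mat_mult N P B) S"
  then obtain c where v: "v = (\<lambda>j. if j < N then (\<Sum>i\<in>S. c i * mat_mult N P B i j) else 0)"
    unfolding row_code_def by blast
  define d where "d k = (\<Sum>i\<in>S. c i * P i k)" for k
  have combination: "(\<Sum>i\<in>S. c i * mat_mult N P B i j) = (\<Sum>k\<in>T. d k * B k j)" for j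
  proof -
    have "\<forall>k\<in>{..<N} - T. d k * B k j = 0"
      using assms(2) by (simp add: d_def)
    then have "(\<Sum>k<N. d k * B k j) = (\<Sum>k\<in>T. d k * B k j)"
      using assms(1) by (intro sum.mono_neutral_right) auto
    then show ?thesis
      by (simp only: lincomb_mat_mult d_def)
  qed
  have "v = (\<lambda>j. if j < N then (\<Sum>k\<in>T. d k * B k j) else 0)"
    unfolding v combination ..
  then show "v \<in> row_code N B T"
    unfolding row_code_def by blast
qed

lemma upper_triangular_row_support:
  fixes N :: nat and P :: "nat \<Rightarrow> nat \<Rightarrow> 'a::zero"
  assumes "finite A" and "\<forall>i<N. \<forall>j<N. j < i \<longrightarrow> P i j = 0"
    and "i \<in> A" and "i < N" and "k < N" and "k \<notin> {Min A..N-1}"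
  shows "P i k = 0"
proof -
  have "k < Min A"
    using assms(5,6) by auto
  also have "Min A \<le> i"
    using assms(1,3) by simp
  finally show ?thesis
    using assms(2,4,5) by blast
qed

theorem lemma1:
  fixes m N :: nat and A :: "nat set" and P :: "nat \<Rightarrow> nat \<Rightarrow> bit"
  assumes "m \<ge> 1"
    and "N = 2 ^ m"
    and "A \<subseteq> {0..N-1}"
    and "A \<noteq> {}"
    and "\<forall>i<N. \<forall>j<N. j < i \<longrightarrow> P i j = 0"
    and "\<forall>i<N. P i i = 1"
  shows "row_code N (mat_mult N P (polarG m)) A \<subseteq> row_code N (polarG m) {Min A..N-1}"
proof (rule row_code_mat_mult_subset)
  have "N \<ge> 1"
    using assms(2) by simp
  then show "{Min A..N-1} \<subseteq> {..<N}"
    by auto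
  have "A \<subseteq> {..<N}"
    using assms(3) \<open>N \<ge> 1\<close> by auto
  then show "\<And>i k. i \<in> A \<Longrightarrow> k < N \<Longrightarrow> k \<notin> {Min A..N-1} \<Longrightarrow> P i k = 0"
    using upper_triangular_row_support[OF finite_subset[OF assms(3)] assms(5)] by blast
qed

end
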